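(* Let $d$ be a positive integer, $0\le\kappa<d$ real, and $K>0$. Let $\tau,\eta>0$ be constants, and for a positive integer $N$ put $r=\eta(\log N)^{\frac{d\kappa}{d-\kappa}}$ (taken to be an integer) and let $\mathcal{P}_I$ be the set of primes in $I=[\tau(\log N)^{\frac{d}{d-\kappa}},2\tau(\log N)^{\frac{d}{d-\kappa}}]$. Let $S\subseteq[N]^d$ be nonempty and occupy at most $Kp^{\kappa}$ residue classes modulo $p$ for every $p\in\mathcal{P}_I$. There is a constant $C_1$ (depending only on $K$ and $\kappa$) such that if $\eta\ge C_1\tau^{\kappa}$, then there exists $c>0$ (independent of $N$, $S$ and $p$) such that for all sufficiently large $N$ and every prime $p\in\mathcal{P}_I$, there are at least $c|S|^{r+1}$ tuples $(x,L)\in S\times S^r$ that are good mod $p$.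
   Context: A tuple $(x,L)\in S\times S^r$, with $L=(\ell_1,\ldots,\ell_r)$, is called good mod $p$ if $x\equiv \ell_i \pmod p$ (coordinatewise) for some $i$, and bad otherwise. $S^r$ denotes the set of ordered $r$-tuples of elements of $S$. *)

theory Defs
  imports "HOL-Number_Theory.Number_Theory"
begin

text \<open>Points of [N]^d are represented as functions nat => int that take values
in {1..N} on coordinates 0..d-1 and vanish on all other coordinates.\<close>
definition grid :: "nat \<Rightarrow> nat \<Rightarrow> (nat \<Rightarrow> int) set" where
  "grid d N = {x. (\<forall>i<d. x i \<in> {1..int N}) \<and> (\<forall>i\<ge>d. x i = 0)}"

definition res_class :: "nat \<Rightarrow> nat \<Rightarrow> (nat \<Rightarrow> int) \<Rightarrow> (nat \<Rightarrow> int)" where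
  "res_class d p x = (\<lambda>i. if i < d then x i mod int p else 0)"

definition num_classes :: "nat \<Rightarrow> nat \<Rightarrow> (nat \<Rightarrow> int) set \<Rightarrow> nat" where
  "num_classes d p S = card (res_class d p ` S)"

definition cong_vec :: "nat \<Rightarrow> nat \<Rightarrow> (nat \<Rightarrow> int) \<Rightarrow> (nat \<Rightarrow> int) \<Rightarrow> bool" where
  "cong_vec d p x y \<longleftrightarrow> (\<forall>j<d. [x j = y j] (mod int p))"

definition good :: "nat \<Rightarrow> nat \<Rightarrow> nat \<Rightarrow> (nat \<Rightarrow> int) \<Rightarrow> (nat \<Rightarrow> (nat \<Rightarrow> int)) \<Rightarrow> bool" where
  "good d r p x L \<longleftrightarrow> (\<exists>i<r. cong_vec d p x (L i))"

definition tuples :: "nat \<Rightarrow> 'a set \<Rightarrow> (nat \<Rightarrow> 'a) set" where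
  "tuples r S = {..<r} \<rightarrow>\<^sub>E S"

definition r_param :: "nat \<Rightarrow> real \<Rightarrow> real \<Rightarrow> nat \<Rightarrow> nat" where
  "r_param d \<kappa> \<eta> N = nat \<lfloor>\<eta> * ln (real N) powr (real d * \<kappa> / (real d - \<kappa>))\<rfloor>"

definition primes_I :: "nat \<Rightarrow> real \<Rightarrow> real \<Rightarrow> nat \<Rightarrow> nat set" where
  "primes_I d \<kappa> \<tau> N = {p. prime p \<and>
      \<tau> * ln (real N) powr (real d / (real d - \<kappa>)) \<le> real p \<and>
      real p \<le> 2 * \<tau> * ln (real N) powr (real d / (real d - \<kappa>))}"

end

theory Submission
  imports Defs "HOL-Library.FuncSet"
begin

text \<open>Sort \<open>S\<close> into the at most \<open>m \<le> K p\<^sup>\<kappa>\<close> residue classes mod \<open>p\<close>. A point \<open>x\<close> whose class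
  contains \<open>b\<close> points of \<open>S\<close> is missed by a random tuple \<open>L \<in> S\<^sup>r\<close> with probability
  \<open>(1 - b/n)\<^sup>r \<le> n/(r b)\<close>, where \<open>n = |S|\<close>. Summing \<open>1/b\<close> over \<open>x \<in> S\<close> gives exactly \<open>m\<close>, so
  at most a fraction \<open>m/r\<close> of all pairs \<open>(x, L)\<close> is bad. The choice \<open>\<eta> \<ge> 4 K 2\<^sup>\<kappa> \<tau>\<^sup>\<kappa>\<close>
  makes \<open>r \<ge> 2m\<close> for every prime of \<open>I\<close>, so at least half of the pairs are good.\<close>

lemma power_diff_mult_le:
  fixes n b :: real
  assumes "0 \<le> b" "b \<le> n"
  shows "(n - b) ^ r * (n + real r * b) \<le> n ^ (r + 1)"
proof (induction r)
  case 0
  then show ?case by simp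
next
  case (Suc r)
  have "(n - b) ^ Suc r * (n + real (Suc r) * b) = (n - b) ^ r * (n * (n + real r * b) - (real r + 1) * b\<^sup>2)"
    by (simp add: algebra_simps power2_eq_square)
  also have "\<dots> \<le> (n - b) ^ r * (n * (n + real r * b))"
    using assms by (intro mult_left_mono) auto
  also have "\<dots> = n * ((n - b) ^ r * (n + real r * b))"
    by simp
  also have "\<dots> \<le> n * n ^ (r + 1)"
    using Suc assms by (intro mult_left_mono) auto
  finally show ?case
    by simp
qed

lemma power_diff_le_divide:
  fixes n b :: real
  assumes "0 < b" "b \<le> n" "r > 0"
  shows "(n - b) ^ r \<le> n ^ (r + 1) / (real r * b)"
proof -
  have pos: "n + real r * b > 0"
    using assms by (intro add_pos_nonneg) auto
  then have "(n - b) ^ r \<le> n ^ (r + 1) / (n + real r * b)"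
    using power_diff_mult_le[of b n r] assms by (simp add: le_divide_eq)
  also have "\<dots> \<le> n ^ (r + 1) / (real r * b)"
    using assms pos by (intro divide_left_mono mult_pos_pos) auto
  finally show ?thesis .
qed

lemma card_PiE_Diff_PiE:
  assumes "finite S" "B \<subseteq> S"
  shows "real (card (({..<r} \<rightarrow>\<^sub>E S) - ({..<r} \<rightarrow>\<^sub>E (S - B))))
           = real (card S) ^ r - (real (card S) - real (card B)) ^ r"
proof -
  have "({..<r} \<rightarrow>\<^sub>E (S - B)) \<subseteq> ({..<r} \<rightarrow>\<^sub>E S)"
    by (auto simp: PiE_iff)
  moreover have "(card S - card B) ^ r \<le> card S ^ r"
    by (intro power_mono) auto
  ultimately show ?thesis
    using assms by (simp add: card_Diff_subset finite_PiE card_funcsetE finite_subset card_mono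
                              of_nat_diff)
qed

lemma sum_inverse_card_fibre:
  assumes "finite S"
  shows "(\<Sum>x\<in>S. 1 / real (card {y\<in>S. h y = h x})) = real (card (h ` S))"
proof -
  have "(\<Sum>x\<in>S. 1 / real (card {y\<in>S. h y = h x}))
      = (\<Sum>z\<in>h ` S. \<Sum>x\<in>{x\<in>S. h x = z}. 1 / real (card {y\<in>S. h y = h x}))"
    using sum.image_gen[OF assms] .
  also have "\<dots> = (\<Sum>z\<in>h ` S. \<Sum>x\<in>{x\<in>S. h x = z}. 1 / real (card {y\<in>S. h y = z}))"
    by (intro sum.cong) auto
  also have "\<dots> = (\<Sum>z\<in>h ` S. 1)"
    using assms by (intro sum.cong) auto
  finally show ?thesis
    by simp
qed

lemma card_tuples_hitting_fibre_ge:
  fixes S :: "'a set" and h :: "'a \<Rightarrow> 'b"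
  assumes fin: "finite S" and ne: "S \<noteq> {}" and r: "real r \<ge> 2 * real (card (h ` S))"
  shows "real (card {(x, L). x \<in> S \<and> L \<in> {..<r} \<rightarrow>\<^sub>E S \<and> (\<exists>i<r. h (L i) = h x)})
           \<ge> 1/2 * real (card S) ^ (r + 1)"
proof -
  define n where "n = real (card S)"
  define m where "m = real (card (h ` S))"
  define B where "B x = {y\<in>S. h y = h x}" for x
  have B: "finite (B x)" "B x \<subseteq> S" for x
    using fin unfolding B_def by auto
  have B_pos: "card (B x) > 0" if "x \<in> S" for x
    using that B(1)[of x] unfolding B_def by (auto simp: card_gt_0_iff)
  have n: "n > 0" "real (card (B x)) \<le> n" for x
    using fin ne card_mono[OF fin B(2)] unfolding n_def by (auto simp: card_gt_0_iff)
  have "m > 0"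
    using fin ne unfolding m_def by (simp add: card_gt_0_iff)
  with r have r_pos: "r > 0"
    unfolding m_def by linarith
  have pairs: "{(x, L). x \<in> S \<and> L \<in> {..<r} \<rightarrow>\<^sub>E S \<and> (\<exists>i<r. h (L i) = h x)}
      = Sigma S (\<lambda>x. ({..<r} \<rightarrow>\<^sub>E S) - ({..<r} \<rightarrow>\<^sub>E (S - B x)))"
    unfolding B_def by (auto simp: PiE_iff extensional_def)
  have "n ^ (r + 1) * (1/2) \<le> n ^ (r + 1) * (1 - m / real r)"
    using n r r_pos unfolding m_def by (intro mult_left_mono) (auto simp: field_simps)
  also have "\<dots> = n * n ^ r - n ^ (r + 1) / real r * (\<Sum>x\<in>S. 1 / real (card (B x)))"
    using sum_inverse_card_fibre[OF fin, of h] unfolding B_def m_def by (simp add: algebra_simps)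
  also have "\<dots> = (\<Sum>x\<in>S. n ^ r - n ^ (r + 1) / real r * (1 / real (card (B x))))"
    by (simp add: sum_subtractf sum_distrib_left n_def)
  also have "\<dots> \<le> (\<Sum>x\<in>S. n ^ r - (n - real (card (B x))) ^ r)"
    using power_diff_le_divide[OF _ n(2) r_pos] B_pos by (intro sum_mono) simp
  also have "\<dots> = real (card {(x, L). x \<in> S \<and> L \<in> {..<r} \<rightarrow>\<^sub>E S \<and> (\<exists>i<r. h (L i) = h x)})"
    unfolding pairs using fin B by (simp add: card_SigmaI finite_PiE card_PiE_Diff_PiE of_nat_sum n_def)
  finally show ?thesis
    unfolding n_def by simp
qed

lemma good_iff_res_class: "good d r p x L \<longleftrightarrow> (\<exists>i<r. res_class d p (L i) = res_class d p x)"
  unfolding good_def cong_vec_def res_class_def cong_def by (auto simp: fun_eq_iff)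

lemma r_param_ge_twice:
  fixes K \<kappa> \<tau> \<eta> :: real
  assumes "K > 0" "0 \<le> \<kappa>" "\<tau> > 0"
    and \<eta>: "\<eta> \<ge> 4 * K * 2 powr \<kappa> * \<tau> powr \<kappa>"
    and p: "p \<in> primes_I d \<kappa> \<tau> N"
    and m: "real m \<le> K * real p powr \<kappa>" "m \<ge> 1"
  shows "real (r_param d \<kappa> \<eta> N) \<ge> 2 * real m"
proof -
  define X where "X = ln (real N) powr (real d * \<kappa> / (real d - \<kappa>))"
  define e where "e = real d / (real d - \<kappa>)"
  have "real p \<le> 2 * \<tau> * ln (real N) powr e" "prime p"
    using p unfolding primes_I_def e_def by auto
  then have "real p powr \<kappa> \<le> (2 * \<tau> * ln (real N) powr e) powr \<kappa>"
    using assms(2) by (intro powr_mono2) (auto dest: prime_gt_0_nat)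
  also have "\<dots> = 2 powr \<kappa> * \<tau> powr \<kappa> * X"
    using assms(3) by (simp add: powr_mult powr_powr X_def e_def)
  finally have "real m \<le> K * 2 powr \<kappa> * \<tau> powr \<kappa> * X"
    using m assms(1) by (smt (verit) mult.assoc mult_left_mono)
  also have "\<dots> \<le> \<eta> / 4 * X"
    using \<eta> by (intro mult_right_mono) (auto simp: X_def)
  finally have "\<eta> * X \<ge> 4 * real m"
    by simp
  moreover have "real (r_param d \<kappa> \<eta> N) \<ge> \<eta> * X - 1"
    unfolding r_param_def X_def by linarith
  ultimately show ?thesis
    using m by linarith
qed

theorem lemma3p2:
  fixes K \<kappa> :: real
  assumes "K > 0" and "0 \<le> \<kappa>"
  shows "\<exists>C1::real. \<forall>(d::nat) (\<tau>::real) (\<eta>::real).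
     d > 0 \<longrightarrow> \<kappa> < real d \<longrightarrow> \<tau> > 0 \<longrightarrow> \<eta> > 0 \<longrightarrow> \<eta> \<ge> C1 * \<tau> powr \<kappa> \<longrightarrow>
     (\<exists>c::real. c > 0 \<and> (\<exists>N0::nat. \<forall>N\<ge>N0. \<forall>S.
        S \<subseteq> grid d N \<longrightarrow> S \<noteq> {} \<longrightarrow>
        (\<forall>q\<in>primes_I d \<kappa> \<tau> N. real (num_classes d q S) \<le> K * real q powr \<kappa>) \<longrightarrow>
        (\<forall>p\<in>primes_I d \<kappa> \<tau> N.
           real (card {(x, L). x \<in> S \<and> L \<in> tuples (r_param d \<kappa> \<eta> N) S \<and>
                               good d (r_param d \<kappa> \<eta> N) p x L})
           \<ge> c * real (card S) ^ (r_param d \<kappa> \<eta> N + 1))))"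
proof (rule exI[of _ "4 * K * 2 powr \<kappa>"], intro allI impI, rule exI[of _ "1/2"], intro conjI,
    simp, rule exI[of _ 0], intro allI impI ballI)
  fix d :: nat and \<tau> \<eta> :: real and N :: nat and S p
  assume "\<tau> > 0" "\<eta> \<ge> 4 * K * 2 powr \<kappa> * \<tau> powr \<kappa>" "S \<subseteq> grid d N" "S \<noteq> {}"
    and classes: "\<forall>q\<in>primes_I d \<kappa> \<tau> N. real (num_classes d q S) \<le> K * real q powr \<kappa>"
    and p: "p \<in> primes_I d \<kappa> \<tau> N"
  define r where "r = r_param d \<kappa> \<eta> N"
  show "1/2 * real (card S) ^ (r_param d \<kappa> \<eta> N + 1)
      \<le> real (card {(x, L). x \<in> S \<and> L \<in> tuples (r_param d \<kappa> \<eta> N) S \<and> good d (r_param d \<kappa> \<eta> N) p x L})"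
  proof (cases "finite S")
    case True
    have "num_classes d p S \<ge> 1"
      using True \<open>S \<noteq> {}\<close> unfolding num_classes_def by (simp add: Suc_le_eq card_gt_0_iff)
    then have "real r \<ge> 2 * real (card (res_class d p ` S))"
      using r_param_ge_twice[OF assms \<open>\<tau> > 0\<close> _ p] classes p \<open>\<eta> \<ge> _\<close>
      unfolding r_def num_classes_def by blast
    from card_tuples_hitting_fibre_ge[OF True \<open>S \<noteq> {}\<close> this] show ?thesis
      unfolding r_def tuples_def good_iff_res_class by simp
  qed simp
qed

end
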